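(* Let $D$ be a locatable digraph of order $n$. Then $\gamma_{OL}(D)=n$ if and only if $D$ can be constructed as follows. (1) Choose vertex-disjoint directed cycles $C_1,\dots,C_k$ (of orders $n_1+\dots+n_k=n$, loops and 2-cycles allowed) covering $V(D)$; these will be exactly the forcing arcs of $D$. For each vertex $v$, let $f^-(v)$ and $f^+(v)$ be the predecessor and successor of $v$ on its cycle. (2) Choose a partition $V(D)=V_d\cup V_l$ (the domination-forced and the location-forced vertices, respectively). (3) Construct a digraph $\mathcal{H}$ on $V(D)$ which is a disjoint union of vertex-disjoint rooted directed trees, such that the roots of the trees are precisely the vertices $f^+(x)$ with $x\in V_d$, and for every $x\in V_l$, the vertex $f^+(x)$ has an in-neighbour in $\mathcal{H}$. (4) The arc set of $D$ consists of the arcs of $C_1,\dots,C_k$ together with, for each tree $T$ of $\mathcal{H}$ and each vertex $v$ of $T$, an arc from $f^-(v)$ to every descendant of $v$ in $T$.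
   Context: Digraphs are finite and may contain loops; between two distinct vertices there may be arcs in one or both directions, no repeated arcs. $N^-(v)=\{u: uv\text{ is an arc}\}$ (contains $v$ iff $v$ has a loop). An OLD set of $D$ is a set $S\subseteq V(D)$ such that every vertex has an in-neighbour in $S$ and for every two distinct vertices $u,w$ some vertex of $S$ lies in exactly one of $N^-(u),N^-(w)$. $D$ is locatable if it has an OLD set, and then $\gamma_{OL}(D)$ is the minimum size of an OLD set. A vertex $v$ is domination-forced if some vertex $w$ has $N^-(w)=\{v\}$; location-forced if there are distinct vertices $x,y$ with $N^-(x)\ominus N^-(y)=\{v\}$. An arc $xy$ is forcing if $N^-(y)=\{x\}$ or there is a vertex $z$ with $N^-(z)=N^-(y)\setminus\{x\}$. A rooted directed tree is a digraph without loops and directed 2-cycles whose underlying undirected graph is a tree, with a single source (the root) and all arcs oriented away from the root; a single vertex is allowed. The descendants of $v$ in $T$ are the vertices reachable from $v$ by a directed path in $T$. *)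

theory Defs
  imports Main "HOL-Library.Disjoint_Sets"
begin

definition digraph :: "'a set \<Rightarrow> ('a \<times> 'a) set \<Rightarrow> bool" where
  "digraph V A \<longleftrightarrow> finite V \<and> A \<subseteq> V \<times> V"

definition in_nbrs :: "('a \<times> 'a) set \<Rightarrow> 'a \<Rightarrow> 'a set" where
  "in_nbrs A v = {u. (u, v) \<in> A}"

definition OLD_set :: "'a set \<Rightarrow> ('a \<times> 'a) set \<Rightarrow> 'a set \<Rightarrow> bool" where
  "OLD_set V A S \<longleftrightarrow> S \<subseteq> V
     \<and> (\<forall>v\<in>V. in_nbrs A v \<inter> S \<noteq> {})
     \<and> (\<forall>u\<in>V. \<forall>w\<in>V. u \<noteq> w \<longrightarrow> (in_nbrs A u - in_nbrs A w \<union> (in_nbrs A w - in_nbrs A u)) \<inter> S \<noteq> {})"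

definition locatable :: "'a set \<Rightarrow> ('a \<times> 'a) set \<Rightarrow> bool" where
  "locatable V A \<longleftrightarrow> (\<exists>S. OLD_set V A S)"

definition gamma_OL :: "'a set \<Rightarrow> ('a \<times> 'a) set \<Rightarrow> nat" where
  "gamma_OL V A = (LEAST k. \<exists>S. OLD_set V A S \<and> card S = k)"

definition rooted_dtree :: "'a set \<Rightarrow> ('a \<times> 'a) set \<Rightarrow> 'a \<Rightarrow> bool" where
  "rooted_dtree W T r \<longleftrightarrow> finite W \<and> r \<in> W \<and> T \<subseteq> W \<times> W
     \<and> (\<forall>x. (x, x) \<notin> T) \<and> (\<forall>x y. (x, y) \<in> T \<longrightarrow> (y, x) \<notin> T)
     \<and> (\<forall>x\<in>W. \<forall>y\<in>W. (x, y) \<in> (T \<union> T\<inverse>)\<^sup>*) \<and> card T = card W - 1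
     \<and> (\<forall>x\<in>W. in_nbrs T x = {} \<longleftrightarrow> x = r)
     \<and> (\<forall>x\<in>W. (r, x) \<in> T\<^sup>*)"

definition rooted_forest :: "'a set \<Rightarrow> ('a \<times> 'a) set \<Rightarrow> bool" where
  "rooted_forest V H \<longleftrightarrow> (\<exists>P. partition_on V P
     \<and> H \<subseteq> (\<Union>B\<in>P. B \<times> B)
     \<and> (\<forall>B\<in>P. \<exists>r. rooted_dtree B (H \<inter> (B \<times> B)) r))"

definition forest_roots :: "'a set \<Rightarrow> ('a \<times> 'a) set \<Rightarrow> 'a set" where
  "forest_roots V H = {v \<in> V. in_nbrs H v = {}}"

text \<open>The construction of Theorem 18. The vertex-disjoint directed cycles covering V
  are encoded by a permutation f of V (its cycles; fixed points are loops):
  f-plus(v) = f v, f-minus(v) = inv_into V f v.\<close>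
definition constructible :: "'a set \<Rightarrow> ('a \<times> 'a) set \<Rightarrow> bool" where
  "constructible V A \<longleftrightarrow> (\<exists>f Vd Vl H.
      bij_betw f V V
    \<and> Vd \<union> Vl = V \<and> Vd \<inter> Vl = {}
    \<and> H \<subseteq> V \<times> V \<and> rooted_forest V H
    \<and> forest_roots V H = f ` Vd
    \<and> (\<forall>x\<in>Vl. in_nbrs H (f x) \<noteq> {})
    \<and> A = {(v, f v) | v. v \<in> V}
          \<union> {(inv_into V f v, w) | v w. v \<in> V \<and> (v, w) \<in> H\<^sup>*})"

end

theory Submission
  imports Defs
begin

text \<open>Since \<open>V\<close> itself is an OLD set, \<open>\<gamma>\<^sub>O\<^sub>L(D) = n\<close> holds iff no \<open>V - {v}\<close> is an OLD set, i.e.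
  iff every vertex is forced; and \<open>v\<close> is forced iff some \<open>P \<in> {{}} \<union> {N\<^sup>-(w)}\<close> avoids \<open>v\<close> while
  \<open>P \<union> {v}\<close> is again an in-neighbourhood.

  If all \<open>n\<close> vertices are forced, choose such a step \<open>P\<^sub>v\<close> for every \<open>v\<close>. Once its label \<open>x\<close>
  is deleted, a step identifies two of the at most \<open>n + 1\<close> sets \<open>{}, N\<^sup>-(w)\<close>; so deleting all
  labels but \<open>a \<noteq> b\<close> leaves at most three traces. As \<open>{}, P\<^sub>a, P\<^sub>b\<close> and \<open>P\<^sub>a \<union> {a}\<close> have four
  different traces on \<open>{a, b}\<close>, the map \<open>v \<mapsto> P\<^sub>v \<union> {v}\<close> is injective, hence onto the
  in-neighbourhoods: every \<open>N\<^sup>-(w)\<close> is \<open>P\<^sub>v \<union> {v}\<close> for a unique \<open>v\<close>, which becomes \<open>f\<^sup>-(w)\<close>.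
  Making \<open>p\<close> the parent of \<open>w\<close> whenever \<open>N\<^sup>-(p) = P\<^sub>v\<close> for this \<open>v\<close> gives a forest \<open>H\<close> in
  which \<open>N\<^sup>-(w)\<close> is the image under \<open>f\<^sup>-\<close> of the ancestors of \<open>w\<close>: this is the construction.
  Conversely, in a constructed digraph \<open>f\<^sup>-(w)\<close> is domination-forced by \<open>w\<close> if \<open>w\<close> is a root,
  and location-forced by \<open>w\<close> and its parent otherwise.\<close>


section \<open>Forced vertices\<close>

definition forced :: "'a set \<Rightarrow> ('a \<times> 'a) set \<Rightarrow> 'a \<Rightarrow> bool" where
  "forced V A v \<longleftrightarrow> (\<exists>w\<in>V. in_nbrs A w = {v})
     \<or> (\<exists>x\<in>V. \<exists>y\<in>V. x \<noteq> y \<and> sym_diff (in_nbrs A x) (in_nbrs A y) = {v})"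

lemma OLD_set_mono: "OLD_set V A S \<Longrightarrow> S \<subseteq> S' \<Longrightarrow> S' \<subseteq> V \<Longrightarrow> OLD_set V A S'"
  unfolding OLD_set_def by blast

lemma OLD_set_whole_if_locatable: "locatable V A \<Longrightarrow> OLD_set V A V"
  unfolding locatable_def by (metis OLD_set_def OLD_set_mono order_refl)

lemma gamma_OL_eq_card_iff:
  assumes "finite V" "locatable V A"
  shows "gamma_OL V A = card V \<longleftrightarrow> (\<forall>v\<in>V. \<not> OLD_set V A (V - {v}))"
proof
  assume gamma: "gamma_OL V A = card V"
  show "\<forall>v\<in>V. \<not> OLD_set V A (V - {v})"
  proof (intro ballI notI)
    fix v assume "v \<in> V" "OLD_set V A (V - {v})"
    then have "gamma_OL V A \<le> card (V - {v})"
      unfolding gamma_OL_def by (blast intro: Least_le)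
    with gamma card_Diff1_less[OF \<open>finite V\<close> \<open>v \<in> V\<close>] show False by simp
  qed
next
  assume no_smaller: "\<forall>v\<in>V. \<not> OLD_set V A (V - {v})"
  have "\<exists>S. OLD_set V A S \<and> card S = gamma_OL V A"
    unfolding gamma_OL_def by (rule LeastI_ex) (use OLD_set_whole_if_locatable[OF assms(2)] in blast)
  then obtain S where S: "OLD_set V A S" "card S = gamma_OL V A" by blast
  have "S = V"
  proof (rule ccontr)
    assume "S \<noteq> V"
    moreover have "S \<subseteq> V" using S(1) by (simp add: OLD_set_def)
    ultimately obtain v where "v \<in> V" "S \<subseteq> V - {v}" by blast
    with S(1) no_smaller show False by (meson Diff_subset OLD_set_mono)
  qed
  with S show "gamma_OL V A = card V" by simp
qed

lemma not_OLD_set_remove_iff_forced: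
  assumes "digraph V A" "locatable V A" "v \<in> V"
  shows "\<not> OLD_set V A (V - {v}) \<longleftrightarrow> forced V A v"
proof -
  have nonempty_in_V: "X \<inter> (V - {v}) = {} \<longleftrightarrow> X = {v}" if "X \<subseteq> V" "X \<inter> V \<noteq> {}" for X
    using that \<open>v \<in> V\<close> by blast
  have in_nbrs_V: "in_nbrs A w \<subseteq> V" for w
    using \<open>digraph V A\<close> by (auto simp: digraph_def in_nbrs_def)
  have whole: "OLD_set V A V" using OLD_set_whole_if_locatable[OF \<open>locatable V A\<close>] .
  have "in_nbrs A w \<inter> (V - {v}) = {} \<longleftrightarrow> in_nbrs A w = {v}" if "w \<in> V" for w
    using whole that in_nbrs_V by (intro nonempty_in_V) (auto simp: OLD_set_def)
  moreover have "sym_diff (in_nbrs A x) (in_nbrs A y) \<inter> (V - {v}) = {}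
      \<longleftrightarrow> sym_diff (in_nbrs A x) (in_nbrs A y) = {v}" if "x \<in> V" "y \<in> V" "x \<noteq> y" for x y
    using whole that in_nbrs_V by (intro nonempty_in_V) (auto simp: OLD_set_def)
  ultimately show ?thesis using \<open>v \<in> V\<close> unfolding OLD_set_def forced_def by auto
qed

lemma sym_diff_eq_singleton_iff:
  "sym_diff X Y = {v} \<longleftrightarrow> v \<notin> Y \<and> X = insert v Y \<or> v \<notin> X \<and> Y = insert v X"
proof
  assume sym_diff: "sym_diff X Y = {v}"
  then have agree: "z \<in> X \<longleftrightarrow> z \<in> Y" if "z \<noteq> v" for z
    using that by (metis DiffI UnCI singletonD)
  show "v \<notin> Y \<and> X = insert v Y \<or> v \<notin> X \<and> Y = insert v X"
  proof (cases "v \<in> X")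
    case True
    then have "v \<notin> Y" using sym_diff by blast
    moreover have "X = insert v Y" using True \<open>v \<notin> Y\<close> agree by (intro set_eqI) (metis insert_iff)
    ultimately show ?thesis by blast
  next
    case False
    then have "v \<in> Y" using sym_diff by blast
    moreover have "Y = insert v X" using False \<open>v \<in> Y\<close> agree by (intro set_eqI) (metis insert_iff)
    ultimately show ?thesis using False by blast
  qed
qed auto

lemma forced_iff_insert:
  "forced V A v \<longleftrightarrow> (\<exists>P\<in>insert {} (in_nbrs A ` V). v \<notin> P \<and> insert v P \<in> in_nbrs A ` V)"
proof
  assume "forced V A v"
  then consider w where "w \<in> V" "in_nbrs A w = {v}"
    | x y where "x \<in> V" "y \<in> V" "v \<notin> in_nbrs A y" "in_nbrs A x = insert v (in_nbrs A y)"
    unfolding forced_def sym_diff_eq_singleton_iff by blast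
  then show "\<exists>P\<in>insert {} (in_nbrs A ` V). v \<notin> P \<and> insert v P \<in> in_nbrs A ` V"
  proof cases
    case (1 w)
    then show ?thesis by (intro bexI[of _ "{}"]) auto
  next
    case (2 x y)
    then show ?thesis by (intro bexI[of _ "in_nbrs A y"]) auto
  qed
next
  assume "\<exists>P\<in>insert {} (in_nbrs A ` V). v \<notin> P \<and> insert v P \<in> in_nbrs A ` V"
  then obtain P x where P: "P = {} \<or> P \<in> in_nbrs A ` V" "v \<notin> P"
    and x: "x \<in> V" "in_nbrs A x = insert v P"
    by blast
  from P(1) show "forced V A v"
  proof
    assume "P = {}"
    with x show ?thesis unfolding forced_def by blast
  next
    assume "P \<in> in_nbrs A ` V"
    then obtain y where "y \<in> V" "P = in_nbrs A y" by blast
    with P(2) x have "sym_diff (in_nbrs A x) (in_nbrs A y) = {v}" "x \<noteq> y"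
      unfolding sym_diff_eq_singleton_iff by auto
    with x \<open>y \<in> V\<close> show ?thesis unfolding forced_def by blast
  qed
qed

lemma locatable_inj_on_in_nbrs:
  assumes "locatable V A"
  shows "inj_on (in_nbrs A) V"
proof (rule inj_onI, rule ccontr)
  fix x y assume "x \<in> V" "y \<in> V" "in_nbrs A x = in_nbrs A y" "x \<noteq> y"
  moreover from \<open>in_nbrs A x = in_nbrs A y\<close> have "sym_diff (in_nbrs A x) (in_nbrs A y) = {}" by simp
  ultimately show False using OLD_set_whole_if_locatable[OF assms] unfolding OLD_set_def by blast
qed

section \<open>Injectivity of distinctly labelled steps\<close>

lemma card_image_Diff_add_card_le:
  assumes "finite F" "finite L" "\<forall>x\<in>L. \<exists>P\<in>F. x \<notin> P \<and> insert x P \<in> F"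
  shows "card ((\<lambda>P. P - L) ` F) + card L \<le> card F"
  using assms(2,3)
proof (induction L rule: finite_induct)
  case empty
  then show ?case by simp
next
  case (insert x L)
  let ?A = "(\<lambda>P. P - L) ` F"
  obtain P where P: "P \<in> F" "x \<notin> P" "insert x P \<in> F" using insert.prems by blast
  have "P - L \<in> ?A" "insert x P - L \<in> ?A" "P - L \<noteq> insert x P - L"
    using P insert.hyps(2) by auto
  moreover have "(P - L) - {x} = (insert x P - L) - {x}" by auto
  ultimately have "\<not> inj_on (\<lambda>Q. Q - {x}) ?A" by (meson inj_onD)
  moreover have "finite ?A" using \<open>finite F\<close> by simp
  ultimately have "card ((\<lambda>Q. Q - {x}) ` ?A) < card ?A"
    using card_image_le inj_on_iff_eq_card le_neq_implies_less by metis
  moreover have "(\<lambda>P. P - insert x L) ` F = (\<lambda>Q. Q - {x}) ` ?A" by auto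
  ultimately show ?case using insert by simp
qed

lemma inj_on_insert_if_card_le:
  assumes "finite X" "finite F" "card F \<le> card X"
    and steps: "\<forall>x\<in>X. S x \<in> insert {} F \<and> x \<notin> S x \<and> insert x (S x) \<in> F"
  shows "inj_on (\<lambda>x. insert x (S x)) X"
proof (rule inj_onI, rule ccontr)
  fix a b assume a: "a \<in> X" and b: "b \<in> X" and "a \<noteq> b"
    and eq: "insert a (S a) = insert b (S b)"
  define L where "L = X - {a, b}"
  define trace where "trace P = P - L" for P :: "'a set"
  have "S a \<in> insert {} F" "S b \<in> insert {} F" "insert a (S a) \<in> insert {} F"
    using steps a b by auto
  then have traces: "{trace {}, trace (S a), trace (S b), trace (insert a (S a))} \<subseteq> trace ` insert {} F"
    by blast
  have "a \<in> trace (insert a (S a))" "b \<in> trace (insert a (S a))" "a \<notin> trace (S a)"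
    "b \<in> trace (S a)" "a \<in> trace (S b)" "b \<notin> trace (S b)" "trace {} = {}"
    using steps a b eq \<open>a \<noteq> b\<close> by (auto simp: L_def trace_def)
  then have "trace {} \<notin> {trace (S a), trace (S b), trace (insert a (S a))}"
    "trace (S a) \<notin> {trace (S b), trace (insert a (S a))}" "trace (S b) \<noteq> trace (insert a (S a))"
    by auto
  then have "4 + card L = card {trace {}, trace (S a), trace (S b), trace (insert a (S a))} + card L"
    by simp
  also have "\<dots> \<le> card (trace ` insert {} F) + card L"
    using traces \<open>finite F\<close> by (simp add: card_mono)
  also have "\<dots> \<le> card (insert {} F)"
    unfolding trace_def using steps \<open>finite X\<close> \<open>finite F\<close>
    by (intro card_image_Diff_add_card_le) (auto simp: L_def)
  also have "\<dots> \<le> card X + 1"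
    using \<open>finite F\<close> \<open>card F \<le> card X\<close> by (simp add: card_insert_if)
  also have "\<dots> = card L + 3"
  proof -
    have "card {a, b} \<le> card X" using a b \<open>finite X\<close> by (intro card_mono) auto
    then show ?thesis using a b \<open>a \<noteq> b\<close> \<open>finite X\<close> by (simp add: L_def card_Diff_subset)
  qed
  finally show False by simp
qed

section \<open>Rooted trees and forests\<close>

lemma rooted_dtree_single_valued:
  assumes "rooted_dtree W T r"
  shows "single_valued (T\<inverse>)"
proof -
  have "finite W" "r \<in> W" and T_W: "T \<subseteq> W \<times> W" and card_T: "card T = card W - 1"
    and root: "\<forall>x\<in>W. in_nbrs T x = {} \<longleftrightarrow> x = r"
    using assms unfolding rooted_dtree_def by auto
  then have "finite T" by (meson finite_SigmaI finite_subset)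
  have "snd ` T = W - {r}"
    using T_W root by (force simp: in_nbrs_def)
  then have "card (snd ` T) = card T"
    using card_T \<open>finite W\<close> \<open>r \<in> W\<close> by simp
  then have "inj_on snd T" using \<open>finite T\<close> by (simp add: inj_on_iff_eq_card)
  then show ?thesis unfolding single_valued_def by (metis converseD inj_onD snd_conv prod.inject)
qed

lemma rooted_dtree_acyclic:
  assumes "rooted_dtree W T r"
  shows "acyclic T"
  unfolding acyclic_def
proof
  fix x
  have T_W: "T \<subseteq> W \<times> W" and "r \<in> W" and root: "in_nbrs T r = {}" and reach: "\<forall>x\<in>W. (r, x) \<in> T\<^sup>*"
    using assms unfolding rooted_dtree_def by auto
  show "(x, x) \<notin> T\<^sup>+"
  proof (cases "x \<in> W")
    case True
    with reach have "(r, x) \<in> T\<^sup>*" by blast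
    then show ?thesis
    proof (induction rule: rtrancl_induct)
      case base
      show ?case using root by (auto simp: in_nbrs_def dest: tranclD2)
    next
      case (step y z)
      show ?case
      proof
        assume "(z, z) \<in> T\<^sup>+"
        then obtain c where "(z, c) \<in> T\<^sup>*" "(c, z) \<in> T" by (meson tranclD2)
        moreover have "c = y"
          using rooted_dtree_single_valued[OF assms] \<open>(c, z) \<in> T\<close> step.hyps(2)
          unfolding single_valued_def by blast
        ultimately have "(y, y) \<in> T\<^sup>+" using step.hyps(2) by (meson rtrancl_into_trancl2)
        with step.IH show False by contradiction
      qed
    qed
  next
    case False
    then show ?thesis using T_W by (auto dest: tranclD)
  qed
qed

lemma rooted_dtreeI:
  assumes "finite W" "T \<subseteq> W \<times> W" "acyclic T" "single_valued (T\<inverse>)"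
    and "r \<in> W" "in_nbrs T r = {}" and reach: "\<forall>x\<in>W. (r, x) \<in> T\<^sup>*"
  shows "rooted_dtree W T r"
proof -
  have parent: "in_nbrs T x \<noteq> {}" if "x \<in> W" "x \<noteq> r" for x
    using reach that unfolding in_nbrs_def by (metis empty_Collect_eq rtranclE)
  then have roots: "\<forall>x\<in>W. in_nbrs T x = {} \<longleftrightarrow> x = r"
    using \<open>in_nbrs T r = {}\<close> by blast
  have "snd ` T = W - {r}"
    using \<open>T \<subseteq> W \<times> W\<close> roots by (force simp: in_nbrs_def)
  moreover have "inj_on snd T"
    using \<open>single_valued (T\<inverse>)\<close> by (auto simp: inj_on_def single_valued_def)
  ultimately have "card T = card W - 1"
    using \<open>finite W\<close> \<open>r \<in> W\<close> by (metis card_Diff_singleton card_image)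
  moreover have "(x, y) \<in> (T \<union> T\<inverse>)\<^sup>*" if "x \<in> W" "y \<in> W" for x y
  proof -
    have "(x, r) \<in> (T\<inverse>)\<^sup>*" "(r, y) \<in> T\<^sup>*" using reach that by (auto simp: rtrancl_converse)
    then have "(x, r) \<in> (T \<union> T\<inverse>)\<^sup>*" "(r, y) \<in> (T \<union> T\<inverse>)\<^sup>*"
      by (meson Un_upper1 Un_upper2 rtrancl_mono subsetD)+
    then show ?thesis by (rule rtrancl_trans)
  qed
  moreover have "(x, x) \<notin> T" "(x, y) \<in> T \<Longrightarrow> (y, x) \<notin> T" for x y
    using \<open>acyclic T\<close> unfolding acyclic_def by (meson r_into_trancl' trancl_into_trancl)+
  ultimately show ?thesis
    using assms roots unfolding rooted_dtree_def by blast
qed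

definition ancestors :: "('a \<times> 'a) set \<Rightarrow> 'a \<Rightarrow> 'a set" where
  "ancestors H w = {u. (u, w) \<in> H\<^sup>*}"

lemma rtrancl_closed_Sigma: "H \<subseteq> V \<times> V \<Longrightarrow> (u, w) \<in> H\<^sup>* \<Longrightarrow> u \<in> V \<Longrightarrow> w \<in> V"
  by (metis mem_Sigma_iff rtranclE subsetD)

lemma ancestors_subset: "H \<subseteq> V \<times> V \<Longrightarrow> w \<in> V \<Longrightarrow> ancestors H w \<subseteq> V"
  unfolding ancestors_def by (auto elim: converse_rtranclE)

lemma ancestors_root: "in_nbrs H w = {} \<Longrightarrow> ancestors H w = {w}"
  unfolding ancestors_def in_nbrs_def by (auto elim: rtranclE)

lemma ancestors_parent:
  assumes "single_valued (H\<inverse>)" "(p, w) \<in> H"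
  shows "ancestors H w = insert w (ancestors H p)"
proof
  show "ancestors H w \<subseteq> insert w (ancestors H p)"
  proof
    fix u assume "u \<in> ancestors H w"
    then have "(u, w) \<in> H\<^sup>*" by (simp add: ancestors_def)
    then show "u \<in> insert w (ancestors H p)"
    proof (cases rule: rtranclE)
      case (step q)
      with assms have "q = p" unfolding single_valued_def by blast
      with step show ?thesis by (simp add: ancestors_def)
    qed simp
  qed
  show "insert w (ancestors H p) \<subseteq> ancestors H w"
    using assms(2) by (auto simp: ancestors_def intro: rtrancl_into_rtrancl)
qed

lemma ancestors_parent_notin: "acyclic H \<Longrightarrow> (p, w) \<in> H \<Longrightarrow> w \<notin> ancestors H p"
  unfolding ancestors_def acyclic_def by (metis mem_Collect_eq rtrancl_into_trancl1)

lemma root_reaches_ancestors: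
  assumes "single_valued (H\<inverse>)" "in_nbrs H r = {}" "(r, w) \<in> H\<^sup>*" "(u, w) \<in> H\<^sup>*"
  shows "(r, u) \<in> H\<^sup>*"
  using assms(3,4)
proof (induction arbitrary: u rule: rtrancl_induct)
  case base
  with assms(2) show ?case by (auto simp: in_nbrs_def elim: rtranclE)
next
  case (step y z)
  from step.prems show ?case
  proof (cases rule: rtranclE)
    case base
    with step.hyps show ?thesis by (simp add: rtrancl_into_rtrancl)
  next
    case (step q)
    with \<open>(y, z) \<in> H\<close> assms(1) have "q = y" unfolding single_valued_def by blast
    with step show ?thesis using \<open>(u, q) \<in> H\<^sup>*\<close> by (simp add: "step.IH")
  qed
qed

lemma arc_in_block:
  assumes "partition_on V P" "H \<subseteq> (\<Union>B\<in>P. B \<times> B)" "B \<in> P" "(a, b) \<in> H" "a \<in> B \<or> b \<in> B"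
  shows "(a, b) \<in> H \<inter> B \<times> B"
proof -
  obtain B' where "B' \<in> P" "a \<in> B'" "b \<in> B'" using assms(2,4) by blast
  moreover have "B' = B"
    using assms(1,3,5) calculation unfolding partition_on_def disjoint_def by blast
  ultimately show ?thesis using assms(4) by blast
qed

lemma rooted_forestD:
  assumes "rooted_forest V H"
  shows "H \<subseteq> V \<times> V" "acyclic H" "single_valued (H\<inverse>)"
proof -
  obtain P where P: "partition_on V P" "H \<subseteq> (\<Union>B\<in>P. B \<times> B)"
    and trees: "\<forall>B\<in>P. \<exists>r. rooted_dtree B (H \<inter> B \<times> B) r"
    using assms unfolding rooted_forest_def by blast
  show "H \<subseteq> V \<times> V" using P by (auto simp: partition_on_def)
  show "single_valued (H\<inverse>)"
  proof (rule single_valuedI)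
    fix w p q assume "(w, p) \<in> H\<inverse>" "(w, q) \<in> H\<inverse>"
    then have "(p, w) \<in> H" "(q, w) \<in> H" by auto
    then obtain B where "B \<in> P" "w \<in> B" using P(2) by blast
    then have "(p, w) \<in> H \<inter> B \<times> B" "(q, w) \<in> H \<inter> B \<times> B"
      using arc_in_block[OF P \<open>B \<in> P\<close> \<open>(p, w) \<in> H\<close>] arc_in_block[OF P \<open>B \<in> P\<close> \<open>(q, w) \<in> H\<close>]
      by simp_all
    moreover obtain r where "rooted_dtree B (H \<inter> B \<times> B) r" using trees \<open>B \<in> P\<close> by blast
    ultimately show "p = q" by (blast dest: rooted_dtree_single_valued single_valuedD)
  qed
  show "acyclic H"
    unfolding acyclic_def
  proof (intro allI notI)
    fix x assume "(x, x) \<in> H\<^sup>+"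
    then obtain y where "(x, y) \<in> H" by (meson tranclD)
    then obtain B where "B \<in> P" "x \<in> B" using P(2) by blast
    have "(x, z) \<in> (H \<inter> B \<times> B)\<^sup>+ \<and> z \<in> B" if "(x, z) \<in> H\<^sup>+" for z
      using that
    proof (induction rule: trancl_induct)
      case (base z)
      then show ?case using arc_in_block[OF P \<open>B \<in> P\<close> base] \<open>x \<in> B\<close> by blast
    next
      case (step y z)
      then have "(y, z) \<in> H \<inter> B \<times> B" using arc_in_block[OF P \<open>B \<in> P\<close> step(2)] by blast
      with step show ?case by (meson IntD2 mem_Sigma_iff trancl_into_trancl)
    qed
    with \<open>(x, x) \<in> H\<^sup>+\<close> have "(x, x) \<in> (H \<inter> B \<times> B)\<^sup>+" by blast
    moreover obtain r where "rooted_dtree B (H \<inter> B \<times> B) r" using trees \<open>B \<in> P\<close> by blast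
    ultimately show False by (auto dest: rooted_dtree_acyclic simp: acyclic_def)
  qed
qed

lemma rtrancl_restrict_reachable:
  assumes "(r, x) \<in> H\<^sup>*"
  shows "(r, x) \<in> (H \<inter> H\<^sup>* `` {r} \<times> H\<^sup>* `` {r})\<^sup>*"
  using assms
proof (induction rule: rtrancl_induct)
  case (step y z)
  then have "(y, z) \<in> H \<inter> H\<^sup>* `` {r} \<times> H\<^sup>* `` {r}" by (auto intro: rtrancl_into_rtrancl)
  with step.IH show ?case by (rule rtrancl_into_rtrancl)
qed simp

lemma rooted_forestI:
  assumes "finite V" "H \<subseteq> V \<times> V" "acyclic H" "single_valued (H\<inverse>)"
  shows "rooted_forest V H"
proof -
  define block where "block r = H\<^sup>* `` {r}" for r
  let ?R = "forest_roots V H"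
  have "finite H" using assms(1,2) by (meson finite_SigmaI finite_subset)
  then have "wf H" using \<open>acyclic H\<close> by (rule finite_acyclic_wf)
  have root_exists: "\<exists>r\<in>?R. (r, w) \<in> H\<^sup>*" if "w \<in> V" for w
    using \<open>wf H\<close> that
  proof (induction w rule: wf_induct_rule)
    case (less w)
    show ?case
    proof (cases "in_nbrs H w = {}")
      case True
      with less.prems show ?thesis by (auto simp: forest_roots_def)
    next
      case False
      then obtain p where "(p, w) \<in> H" by (auto simp: in_nbrs_def)
      moreover from this obtain r where "r \<in> ?R" "(r, p) \<in> H\<^sup>*"
        using less.IH \<open>H \<subseteq> V \<times> V\<close> by blast
      ultimately show ?thesis by (meson rtrancl_into_rtrancl)
    qed
  qed
  have same_root: "r1 = r2" if "r1 \<in> ?R" "r2 \<in> ?R" "(r1, w) \<in> H\<^sup>*" "(r2, w) \<in> H\<^sup>*" for r1 r2 w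
  proof -
    have "(r1, r2) \<in> H\<^sup>*"
      using that \<open>single_valued (H\<inverse>)\<close> by (auto simp: forest_roots_def intro: root_reaches_ancestors)
    then show ?thesis
      using ancestors_root[of H r2] that(2) by (auto simp: forest_roots_def ancestors_def)
  qed
  have block_V: "block r \<subseteq> V" if "r \<in> V" for r
    using rtrancl_closed_Sigma[OF \<open>H \<subseteq> V \<times> V\<close>] that by (auto simp: block_def)
  have partition: "partition_on V (block ` ?R)"
  proof (rule partition_onI)
    show "\<Union> (block ` ?R) = V"
      using block_V root_exists by (auto simp: forest_roots_def block_def)
    show "disjnt B1 B2" if "B1 \<in> block ` ?R" "B2 \<in> block ` ?R" "B1 \<noteq> B2" for B1 B2
      using that same_root by (auto simp: disjnt_def block_def)
    show "{} \<notin> block ` ?R" by (auto simp: block_def)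
  qed
  have arcs_in_blocks: "H \<subseteq> (\<Union>B\<in>block ` ?R. B \<times> B)"
  proof (rule subrelI)
    fix p w assume "(p, w) \<in> H"
    moreover from this obtain r where "r \<in> ?R" "(r, p) \<in> H\<^sup>*"
      using root_exists \<open>H \<subseteq> V \<times> V\<close> by blast
    ultimately show "(p, w) \<in> (\<Union>B\<in>block ` ?R. B \<times> B)"
      by (auto simp: block_def intro: rtrancl_into_rtrancl)
  qed
  have trees: "rooted_dtree (block r) (H \<inter> block r \<times> block r) r" if "r \<in> ?R" for r
  proof (rule rooted_dtreeI)
    show "finite (block r)" using block_V that \<open>finite V\<close> by (auto simp: forest_roots_def intro: finite_subset)
    show "acyclic (H \<inter> block r \<times> block r)" using \<open>acyclic H\<close> by (rule acyclic_subset) blast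
    show "single_valued ((H \<inter> block r \<times> block r)\<inverse>)"
      using \<open>single_valued (H\<inverse>)\<close> by (rule single_valued_subset[rotated]) blast
    show "in_nbrs (H \<inter> block r \<times> block r) r = {}"
      using that by (auto simp: forest_roots_def in_nbrs_def)
    show "\<forall>x\<in>block r. (r, x) \<in> (H \<inter> block r \<times> block r)\<^sup>*"
      unfolding block_def by (auto intro: rtrancl_restrict_reachable)
  qed (auto simp: block_def)
  then have "\<forall>B\<in>block ` ?R. \<exists>r. rooted_dtree B (H \<inter> B \<times> B) r" by blast
  with partition arcs_in_blocks show ?thesis
    unfolding rooted_forest_def by (intro exI[of _ "block ` ?R"]) simp
qed

section \<open>In-neighbourhoods as images of ancestor sets\<close>

lemma image_ancestors_insert_step:
  assumes "inj_on g V" "H \<subseteq> V \<times> V" "acyclic H" "single_valued (H\<inverse>)"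
    and N: "\<forall>w\<in>V. N w = g ` ancestors H w" and "w \<in> V"
  shows "\<exists>P\<in>insert {} (N ` V). g w \<notin> P \<and> insert (g w) P \<in> N ` V"
proof (cases "in_nbrs H w = {}")
  case True
  then have "N w = {g w}" using N \<open>w \<in> V\<close> by (simp add: ancestors_root)
  with \<open>w \<in> V\<close> show ?thesis by (intro bexI[of _ "{}"]) auto
next
  case False
  then obtain p where "(p, w) \<in> H" by (auto simp: in_nbrs_def)
  then have "p \<in> V" using \<open>H \<subseteq> V \<times> V\<close> by blast
  have N_p: "N p = g ` ancestors H p" using N \<open>p \<in> V\<close> by blast
  have "N w = g ` ancestors H w" using N \<open>w \<in> V\<close> by blast
  also have "\<dots> = insert (g w) (N p)"
    using ancestors_parent[OF \<open>single_valued (H\<inverse>)\<close> \<open>(p, w) \<in> H\<close>] N_p by simp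
  finally have N_w: "N w = insert (g w) (N p)" .
  have "g w \<notin> N p"
  proof
    assume "g w \<in> N p"
    then obtain u where "u \<in> ancestors H p" "g w = g u" unfolding N_p ..
    moreover have "ancestors H p \<subseteq> V" using ancestors_subset[OF \<open>H \<subseteq> V \<times> V\<close> \<open>p \<in> V\<close>] .
    ultimately have "w = u" using \<open>inj_on g V\<close> \<open>w \<in> V\<close> by (auto dest: inj_onD)
    with \<open>u \<in> ancestors H p\<close> ancestors_parent_notin[OF \<open>acyclic H\<close> \<open>(p, w) \<in> H\<close>] show False
      by simp
  qed
  with N_w \<open>w \<in> V\<close> \<open>p \<in> V\<close> show ?thesis by (intro bexI[of _ "N p"]) auto
qed

lemma forest_of_insert_steps:
  fixes N :: "'a \<Rightarrow> 'b set"
  assumes "inj_on N V"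
    and steps: "\<forall>w\<in>V. finite (N w) \<and> g w \<notin> P w \<and> N w = insert (g w) (P w) \<and> P w \<in> insert {} (N ` V)"
  shows "\<exists>H. H \<subseteq> V \<times> V \<and> acyclic H \<and> single_valued (H\<inverse>) \<and> (\<forall>w\<in>V. N w = g ` ancestors H w)"
proof -
  define H where "H = {(p, w). p \<in> V \<and> w \<in> V \<and> N p = P w}"
  have "card (N p) < card (N w)" if "(p, w) \<in> H" for p w
  proof -
    from that have "w \<in> V" "N p = P w" by (auto simp: H_def)
    with steps have "finite (N p)" "g w \<notin> N p" "N w = insert (g w) (N p)" by auto
    then show ?thesis by simp
  qed
  then have "wf H" by (intro wf_subset[OF wf_measure[of "\<lambda>w. card (N w)"]]) auto
  have "single_valued (H\<inverse>)"
    using \<open>inj_on N V\<close> by (auto simp: H_def single_valued_def dest: inj_onD)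
  have "N w = g ` ancestors H w" if "w \<in> V" for w
    using \<open>wf H\<close> that
  proof (induction w rule: wf_induct_rule)
    case (less w)
    with steps have N_w: "N w = insert (g w) (P w)" and "P w \<in> insert {} (N ` V)" by blast+
    then consider "P w = {}" | p where "p \<in> V" "P w = N p" by blast
    then show ?case
    proof cases
      case 1
      have "N p \<noteq> {}" if "p \<in> V" for p using steps that by blast
      then have "in_nbrs H w = {}" using 1 by (auto simp: H_def in_nbrs_def)
      with 1 N_w show ?thesis by (simp add: ancestors_root)
    next
      case (2 p)
      then have "(p, w) \<in> H" using less.prems by (simp add: H_def)
      with less.IH 2 N_w show ?thesis
        using ancestors_parent[OF \<open>single_valued (H\<inverse>)\<close>] by simp
    qed
  qed
  moreover have "H \<subseteq> V \<times> V" by (auto simp: H_def)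
  ultimately show ?thesis
    using wf_acyclic[OF \<open>wf H\<close>] \<open>single_valued (H\<inverse>)\<close> by (intro exI[of _ H]) simp
qed

lemma in_nbrs_construction:
  assumes f: "bij_betw f V V" and "H \<subseteq> V \<times> V" "w \<in> V"
  shows "in_nbrs ({(v, f v) | v. v \<in> V} \<union> {(inv_into V f v, w) | v w. v \<in> V \<and> (v, w) \<in> H\<^sup>*}) w
    = inv_into V f ` ancestors H w" (is "in_nbrs ?A w = ?g ` _")
proof (rule set_eqI)
  fix a
  have "a \<in> in_nbrs ?A w \<longleftrightarrow> (a \<in> V \<and> w = f a) \<or> (\<exists>u\<in>V. (u, w) \<in> H\<^sup>* \<and> a = ?g u)"
    by (auto simp: in_nbrs_def)
  also have "\<dots> \<longleftrightarrow> a = ?g w \<or> (\<exists>u\<in>V. (u, w) \<in> H\<^sup>* \<and> a = ?g u)"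
    using f \<open>w \<in> V\<close> by (metis bij_betw_imp_surj_on bij_betw_inv_into_left inv_into_into f_inv_into_f)
  also have "\<dots> \<longleftrightarrow> (\<exists>u\<in>V. (u, w) \<in> H\<^sup>* \<and> a = ?g u)"
    using \<open>w \<in> V\<close> by blast
  also have "\<dots> \<longleftrightarrow> a \<in> ?g ` ancestors H w"
    using ancestors_subset[OF \<open>H \<subseteq> V \<times> V\<close> \<open>w \<in> V\<close>] by (auto simp: ancestors_def)
  finally show "a \<in> in_nbrs ?A w \<longleftrightarrow> a \<in> ?g ` ancestors H w" .
qed

lemma arcs_eqI:
  assumes "A \<subseteq> V \<times> V" "B \<subseteq> V \<times> V" "\<forall>w\<in>V. in_nbrs A w = in_nbrs B w"
  shows "A = B"
proof (rule subset_antisym; rule subrelI)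
  fix a w
  show "(a, w) \<in> A \<Longrightarrow> (a, w) \<in> B" "(a, w) \<in> B \<Longrightarrow> (a, w) \<in> A"
    using assms unfolding in_nbrs_def by blast+
qed

text \<open>The cycle arcs \<open>(v, f v)\<close> of the construction are the case \<open>u = w\<close> of the arcs
  \<open>(f\<^sup>- u, w)\<close>, and the partition \<open>V\<^sub>d \<union> V\<^sub>l\<close> can always be taken as \<open>V\<^sub>d = f\<^sup>-(roots)\<close>.\<close>

lemma constructible_iff_in_nbrs:
  assumes "digraph V A"
  shows "constructible V A \<longleftrightarrow>
    (\<exists>g H. bij_betw g V V \<and> rooted_forest V H \<and> (\<forall>w\<in>V. in_nbrs A w = g ` ancestors H w))"
proof
  assume "constructible V A"
  then obtain f Vd Vl H where f: "bij_betw f V V" and "H \<subseteq> V \<times> V" "rooted_forest V H"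
    and A: "A = {(v, f v) | v. v \<in> V} \<union> {(inv_into V f v, w) | v w. v \<in> V \<and> (v, w) \<in> H\<^sup>*}"
    unfolding constructible_def by blast
  have "bij_betw (inv_into V f) V V" using f by (rule bij_betw_inv_into)
  moreover have "\<forall>w\<in>V. in_nbrs A w = inv_into V f ` ancestors H w"
    using in_nbrs_construction[OF f \<open>H \<subseteq> V \<times> V\<close>] by (simp add: A)
  ultimately show "\<exists>g H. bij_betw g V V \<and> rooted_forest V H \<and> (\<forall>w\<in>V. in_nbrs A w = g ` ancestors H w)"
    using \<open>rooted_forest V H\<close> by blast
next
  assume "\<exists>g H. bij_betw g V V \<and> rooted_forest V H \<and> (\<forall>w\<in>V. in_nbrs A w = g ` ancestors H w)"
  then obtain g H where g: "bij_betw g V V" and "rooted_forest V H"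
    and N: "\<forall>w\<in>V. in_nbrs A w = g ` ancestors H w"
    by blast
  have "H \<subseteq> V \<times> V" using rooted_forestD(1)[OF \<open>rooted_forest V H\<close>] .
  define f where "f = inv_into V g"
  have f: "bij_betw f V V" unfolding f_def using g by (rule bij_betw_inv_into)
  have g_f: "g (f x) = x" and f_g: "f (g x) = x" and f_V: "f x \<in> V" if "x \<in> V" for x
    using g that unfolding f_def bij_betw_def by (auto simp: f_inv_into_f inv_into_into)
  define Vd where "Vd = g ` forest_roots V H"
  define Vl where "Vl = V - Vd"
  have "Vd \<subseteq> V" using g by (auto simp: Vd_def forest_roots_def bij_betw_def)
  then have partition: "Vd \<union> Vl = V" "Vd \<inter> Vl = {}" by (auto simp: Vl_def)
  have roots: "forest_roots V H = f ` Vd"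
    using f_g by (force simp: Vd_def forest_roots_def)
  have non_roots: "\<forall>x\<in>Vl. in_nbrs H (f x) \<noteq> {}"
    using g_f f_V by (force simp: Vl_def Vd_def forest_roots_def)
  let ?arcs = "{(v, f v) | v. v \<in> V} \<union> {(inv_into V f v, w) | v w. v \<in> V \<and> (v, w) \<in> H\<^sup>*}"
  have "A = ?arcs"
  proof (rule arcs_eqI)
    show "A \<subseteq> V \<times> V" using \<open>digraph V A\<close> by (simp add: digraph_def)
    show "?arcs \<subseteq> V \<times> V"
      using f_V rtrancl_closed_Sigma[OF \<open>H \<subseteq> V \<times> V\<close>] f
      by (auto intro: inv_into_into simp: bij_betw_def)
    have "inv_into V f u = g u" if "u \<in> V" for u
      unfolding f_def using inv_into_inv_into_eq[OF g that] .
    then show "\<forall>w\<in>V. in_nbrs A w = in_nbrs ?arcs w"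
      using N in_nbrs_construction[OF f \<open>H \<subseteq> V \<times> V\<close>] ancestors_subset[OF \<open>H \<subseteq> V \<times> V\<close>]
      by (simp add: subset_iff cong: image_cong)
  qed
  with f partition \<open>H \<subseteq> V \<times> V\<close> \<open>rooted_forest V H\<close> roots non_roots show "constructible V A"
    unfolding constructible_def by blast
qed

lemma constructible_imp_forced:
  assumes "digraph V A" "constructible V A" "v \<in> V"
  shows "forced V A v"
proof -
  obtain g H where g: "bij_betw g V V" and "rooted_forest V H"
    and N: "\<forall>w\<in>V. in_nbrs A w = g ` ancestors H w"
    using assms(1,2) constructible_iff_in_nbrs by blast
  obtain w where "w \<in> V" "v = g w" using g \<open>v \<in> V\<close> by (auto simp: bij_betw_def)
  have "inj_on g V" using g by (simp add: bij_betw_def)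
  have "\<exists>P\<in>insert {} (in_nbrs A ` V). g w \<notin> P \<and> insert (g w) P \<in> in_nbrs A ` V"
    by (rule image_ancestors_insert_step[OF \<open>inj_on g V\<close> rooted_forestD[OF \<open>rooted_forest V H\<close>] N \<open>w \<in> V\<close>])
  then show ?thesis unfolding forced_iff_insert \<open>v = g w\<close> .
qed

lemma all_forced_imp_constructible:
  assumes "digraph V A" "locatable V A" and forced: "\<forall>v\<in>V. forced V A v"
  shows "constructible V A"
proof -
  let ?N = "in_nbrs A"
  have "finite V" using \<open>digraph V A\<close> by (simp add: digraph_def)
  have N_V: "?N w \<subseteq> V" for w using \<open>digraph V A\<close> by (auto simp: digraph_def in_nbrs_def)
  then have "finite (?N w)" for w using \<open>finite V\<close> by (rule finite_subset)
  have "inj_on ?N V" using \<open>locatable V A\<close> by (rule locatable_inj_on_in_nbrs)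
  obtain S where S: "\<forall>x\<in>V. S x \<in> insert {} (?N ` V) \<and> x \<notin> S x \<and> insert x (S x) \<in> ?N ` V"
    using forced unfolding forced_iff_insert by metis
  define T where "T x = insert x (S x)" for x
  have "inj_on T V"
    unfolding T_def using inj_on_insert_if_card_le \<open>finite V\<close> card_image_le S by blast
  have "T ` V = ?N ` V"
  proof (rule card_seteq)
    show "T ` V \<subseteq> ?N ` V" using S by (auto simp: T_def)
    show "card (?N ` V) \<le> card (T ` V)"
      using card_image[OF \<open>inj_on T V\<close>] card_image_le[OF \<open>finite V\<close>] by simp
  qed (use \<open>finite V\<close> in simp)
  define g where "g w = inv_into V T (?N w)" for w
  have "bij_betw g V V"
  proof -
    have "bij_betw ?N V (T ` V)" using \<open>inj_on ?N V\<close> \<open>T ` V = ?N ` V\<close> by (simp add: bij_betw_def)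
    moreover have "bij_betw (inv_into V T) (T ` V) V"
      using \<open>inj_on T V\<close> by (simp add: bij_betw_inv_into inj_on_imp_bij_betw)
    ultimately show ?thesis unfolding g_def by (rule bij_betw_trans[unfolded comp_def])
  qed
  have "T (g w) = ?N w" if "w \<in> V" for w
    unfolding g_def using that \<open>T ` V = ?N ` V\<close> by (simp add: f_inv_into_f)
  moreover have "g w \<in> V" if "w \<in> V" for w
    using \<open>bij_betw g V V\<close> that by (auto simp: bij_betw_def)
  ultimately have steps: "\<forall>w\<in>V. finite (?N w) \<and> g w \<notin> S (g w) \<and> ?N w = insert (g w) (S (g w))
      \<and> S (g w) \<in> insert {} (?N ` V)"
    using S \<open>finite (?N _)\<close> by (auto simp: T_def)
  obtain H where H: "H \<subseteq> V \<times> V" "acyclic H" "single_valued (H\<inverse>)"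
    and N: "\<forall>w\<in>V. ?N w = g ` ancestors H w"
    using forest_of_insert_steps[OF \<open>inj_on ?N V\<close> steps] by blast
  have "rooted_forest V H" using rooted_forestI[OF \<open>finite V\<close> H] .
  with \<open>bij_betw g V V\<close> N show ?thesis
    unfolding constructible_iff_in_nbrs[OF \<open>digraph V A\<close>] by blast
qed

theorem theorem18:
  fixes V :: "'a set" and A :: "('a \<times> 'a) set"
  assumes "digraph V A" and "locatable V A"
  shows "gamma_OL V A = card V \<longleftrightarrow> constructible V A"
proof -
  have "finite V" using assms(1) by (simp add: digraph_def)
  have "gamma_OL V A = card V \<longleftrightarrow> (\<forall>v\<in>V. forced V A v)"
    using gamma_OL_eq_card_iff[OF \<open>finite V\<close> assms(2)] not_OLD_set_remove_iff_forced[OF assms] by simp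
  also have "\<dots> \<longleftrightarrow> constructible V A"
    using all_forced_imp_constructible[OF assms] constructible_imp_forced[OF assms(1)] by blast
  finally show ?thesis .
qed

end
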